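(* Suppose $\bar f:[a,b]\to\mathbb{R}_\mathcal{I}$ is differentiable on $[a,b]$ and $g:[a,b]\to[a,b]$ is differentiable. Then for every $x\in[a,b]$, $$(\bar f\circ g)'(x)=\bar f'(y)\,g'(x),\qquad y=g(x),$$ where $\bar f'(y)\,g'(x)$ denotes the scalar multiple $g'(x)\bar f'(y)$.
   Context: An interval number is a closed interval $\bar a=[a_l,a_r]$ with $a_l<a_r$ real; $\mathbb{R}_\mathcal{I}$ is the set of interval numbers. Write $a_c=(a_l+a_r)/2$, $a_w=(a_r-a_l)/2>0$, $\bar a=\langle a_c;a_w\rangle=[a_c-a_w,a_c+a_w]$. Operations: $\bar a-\bar b=\langle a_c-b_c;a_w/b_w\rangle$, $k\bar a=\langle ka_c;a_w^k\rangle$ for $k\in\mathbb{R}$ (a product of an interval number with a real number $k$ is this scalar multiple); for real $h\neq0$, $\bar c/h=\langle c_c/h;c_w^{1/h}\rangle$. Distance $d(\bar a,\bar b)=\sqrt{(a_c-b_c)^2+(\ln a_w-\ln b_w)^2}$; limits are with respect to $d$. $\bar f$ is differentiable at $x_0$ if $\bar f'(x_0)=\lim_{h\to0}\frac{\bar f(x_0+h)-\bar f(x_0)}{h}$ exists in $\mathbb{R}_\mathcal{I}$ (with $x_0+h\in[a,b]$); differentiable on $[a,b]$ if at every point. *)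

theory Defs
  imports "HOL-Analysis.Analysis"
begin

text \<open>Interval numbers [a_l, a_r] with a_l < a_r, represented by
  centre a_c = (a_l+a_r)/2 and half-width a_w = (a_r-a_l)/2 > 0.\<close>

typedef inum = "{p :: real \<times> real. snd p > 0}"
  by (rule exI[of _ "(0, 1)"]) simp

setup_lifting type_definition_inum

lift_definition icen :: "inum \<Rightarrow> real" is fst .
lift_definition iwid :: "inum \<Rightarrow> real" is snd .

definition iset :: "inum \<Rightarrow> real set" where
  "iset A = {icen A - iwid A .. icen A + iwid A}"

lift_definition iminus :: "inum \<Rightarrow> inum \<Rightarrow> inum"
  is "\<lambda>(ac, aw) (bc, bw). (ac - bc, aw / bw)"
  by auto

lift_definition iscale :: "real \<Rightarrow> inum \<Rightarrow> inum"
  is "\<lambda>k (ac, aw). (k * ac, aw powr k)"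
  by auto

lift_definition idiv :: "inum \<Rightarrow> real \<Rightarrow> inum"
  is "\<lambda>(cc, cw) h. (cc / h, cw powr (1 / h))"
  by auto

definition idist :: "inum \<Rightarrow> inum \<Rightarrow> real" where
  "idist A B = sqrt ((icen A - icen B)^2 + (ln (iwid A) - ln (iwid B))^2)"

definition itendsto :: "('b \<Rightarrow> inum) \<Rightarrow> inum \<Rightarrow> 'b filter \<Rightarrow> bool" where
  "itendsto F L net \<longleftrightarrow> (\<forall>e>0. eventually (\<lambda>h. idist (F h) L < e) net)"

definition has_ideriv_on :: "(real \<Rightarrow> inum) \<Rightarrow> inum \<Rightarrow> real \<Rightarrow> real \<Rightarrow> real \<Rightarrow> bool" where
  "has_ideriv_on f D x0 a b \<longleftrightarrow>
     itendsto (\<lambda>h. idiv (iminus (f (x0 + h)) (f x0)) h) D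
       (at 0 within {h. x0 + h \<in> {a..b}})"

end

theory Submission
  imports Defs
begin

text \<open>The map \<open>\<langle>a\<^sub>c; a\<^sub>w\<rangle> \<mapsto> (a\<^sub>c, ln a\<^sub>w)\<close> is an isometry from interval numbers
  onto the plane which turns subtraction, division by \<open>h\<close> and scalar multiplication into
  the corresponding vector operations. Hence an interval function is differentiable
  exactly when its centre and its log-width are, its derivative has the two derivatives
  as centre and log-width, and the chain rule follows coordinatewise from the real one.\<close>

lemma iwid_pos: "iwid A > 0"
  by transfer auto

lemma icen_iminus [simp]: "icen (iminus A B) = icen A - icen B"
  by transfer auto

lemma iwid_iminus: "iwid (iminus A B) = iwid A / iwid B"
  by transfer auto

lemma icen_idiv [simp]: "icen (idiv A h) = icen A / h"
  by transfer auto

lemma iwid_idiv: "iwid (idiv A h) = iwid A powr (1 / h)"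
  by transfer auto

lemma icen_iscale [simp]: "icen (iscale k A) = k * icen A"
  by transfer auto

lemma iwid_iscale: "iwid (iscale k A) = iwid A powr k"
  by transfer auto

lemma ln_iwid_idiv_iminus [simp]:
  "ln (iwid (idiv (iminus A B) h)) = (ln (iwid A) - ln (iwid B)) / h"
  using iwid_pos[of A] iwid_pos[of B] by (simp add: iwid_idiv iwid_iminus ln_powr ln_div)

lemma ln_iwid_iscale [simp]: "ln (iwid (iscale k A)) = k * ln (iwid A)"
  using iwid_pos[of A] by (simp add: iwid_iscale ln_powr)

definition icoords :: "inum \<Rightarrow> real \<times> real" where
  "icoords A = (icen A, ln (iwid A))"

lemma idist_icoords: "idist A B = dist (icoords A) (icoords B)"
  by (simp add: idist_def icoords_def dist_Pair_Pair dist_real_def)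

lemma itendsto_iff_tendsto_icoords:
  "itendsto F L net \<longleftrightarrow> ((\<lambda>h. icoords (F h)) \<longlongrightarrow> icoords L) net"
  unfolding itendsto_def tendsto_iff idist_icoords ..

lemma itendsto_iff:
  "itendsto F L net \<longleftrightarrow>
     ((\<lambda>h. icen (F h)) \<longlongrightarrow> icen L) net \<and> ((\<lambda>h. ln (iwid (F h))) \<longlongrightarrow> ln (iwid L)) net"
  unfolding itendsto_iff_tendsto_icoords icoords_def
  by (fastforce intro: tendsto_Pair dest: tendsto_fst tendsto_snd)

lemma has_field_derivative_iff_shifted_quotient:
  fixes F :: "'a::real_normed_field \<Rightarrow> 'a"
  shows "(F has_field_derivative D) (at x within S) \<longleftrightarrow>
    ((\<lambda>h. (F (x + h) - F x) / h) \<longlongrightarrow> D) (at 0 within {h. x + h \<in> S})"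
proof -
  have "(+) x ` {h. x + h \<in> S} = S"
  proof (intro equalityI subsetI)
    fix y assume "y \<in> S"
    then show "y \<in> (+) x ` {h. x + h \<in> S}"
      by (intro image_eqI[of y _ "y - x"]) auto
  qed auto
  then show ?thesis
    using DERIV_at_within_shift[of F D x 0 "{h. x + h \<in> S}"]
    by (simp add: has_field_derivative_iff)
qed

lemma has_ideriv_on_iff:
  "has_ideriv_on f D x a b \<longleftrightarrow>
     ((\<lambda>y. icen (f y)) has_real_derivative icen D) (at x within {a..b}) \<and>
     ((\<lambda>y. ln (iwid (f y))) has_real_derivative ln (iwid D)) (at x within {a..b})"
  by (simp add: has_ideriv_on_def itendsto_iff has_field_derivative_iff_shifted_quotient)

lemma has_ideriv_on_compose:
  assumes f: "has_ideriv_on f D (g x) a b"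
    and g: "(g has_real_derivative E) (at x within {a..b})"
    and g_maps: "g ` {a..b} \<subseteq> {a..b}"
  shows "has_ideriv_on (f \<circ> g) (iscale E D) x a b"
proof -
  have "((\<lambda>y. icen (f y)) \<circ> g has_real_derivative icen D * E) (at x within {a..b})"
       "((\<lambda>y. ln (iwid (f y))) \<circ> g has_real_derivative ln (iwid D) * E) (at x within {a..b})"
    using f g_maps unfolding has_ideriv_on_iff
    by (auto intro!: DERIV_image_chain[OF DERIV_subset g])
  then show ?thesis
    by (simp add: has_ideriv_on_iff o_def mult.commute)
qed

theorem theorem4p7:
  fixes f :: "real \<Rightarrow> inum" and f' :: "real \<Rightarrow> inum"
    and g g' :: "real \<Rightarrow> real" and a b :: real
  assumes f_diff: "\<forall>y\<in>{a..b}. has_ideriv_on f (f' y) y a b"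
    and g_maps: "\<forall>x\<in>{a..b}. g x \<in> {a..b}"
    and g_diff: "\<forall>x\<in>{a..b}. (g has_real_derivative g' x) (at x within {a..b})"
  shows "\<forall>x\<in>{a..b}. has_ideriv_on (f \<circ> g) (iscale (g' x) (f' (g x))) x a b"
  using f_diff g_maps g_diff by (blast intro: has_ideriv_on_compose)

end
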